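(* Let $n\ge1$ and $0\le k_1<k_2\le n$ be integers. Let $C_1\subseteq\mathbb{F}_4^n$ be a self-orthogonal additive code with $|C_1|=2^{n-k_1}$, and suppose every nonzero vector of $C_1^\perp$ has weight at least $d_1$. Let $d\ge1$ be an integer with \[ \sum_{i=1}^{d-1}3^i\binom{n}{i}<\frac{2^{n-k_1}-1}{2^{k_2-k_1}-1}. \] Then there exists a self-orthogonal additive code $C_2\subseteq C_1$ with $|C_2|=2^{n-k_2}$ such that every nonzero vector of $C_2^\perp$ has weight at least $\min\{d,d_1\}$.
   Context: $\mathbb{F}_4=\{0,1,\omega,\omega^2\}$, $\omega^2=\omega+1$, $\bar x=x^2$; trace inner product $\langle u,v\rangle=\sum_i(u_i\bar v_i+\bar u_iv_i)\in\mathbb{F}_2$ on $\mathbb{F}_4^n$; additive codes are $\mathbb{F}_2$-subspaces of $\mathbb{F}_4^n$; $C^\perp$ is the trace dual; self-orthogonal means $C\subseteq C^\perp$; weight = number of nonzero coordinates. *)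

theory Defs
  imports Complex_Main
begin

text \<open>The field F_4 = {0, 1, w, w^2} with w^2 = w + 1.\<close>
datatype f4 = F0 | F1 | FW | FW2

fun f4add :: "f4 \<Rightarrow> f4 \<Rightarrow> f4" where
  "f4add F0 y = y"
| "f4add x F0 = x"
| "f4add F1 F1 = F0" | "f4add F1 FW = FW2" | "f4add F1 FW2 = FW"
| "f4add FW F1 = FW2" | "f4add FW FW = F0" | "f4add FW FW2 = F1"
| "f4add FW2 F1 = FW" | "f4add FW2 FW = F1" | "f4add FW2 FW2 = F0"

fun f4mul :: "f4 \<Rightarrow> f4 \<Rightarrow> f4" where
  "f4mul F0 y = F0"
| "f4mul x F0 = F0"
| "f4mul F1 y = y"
| "f4mul x F1 = x"
| "f4mul FW FW = FW2" | "f4mul FW FW2 = F1"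
| "f4mul FW2 FW = F1" | "f4mul FW2 FW2 = FW"

instantiation f4 :: comm_monoid_add
begin
definition zero_f4 :: f4 where "zero_f4 = F0"
definition plus_f4 :: "f4 \<Rightarrow> f4 \<Rightarrow> f4" where "plus_f4 = f4add"
instance
proof
  fix a b c :: f4
  show "a + b + c = a + (b + c)" unfolding plus_f4_def
    by (cases a; cases b; cases c) auto
  show "a + b = b + a" unfolding plus_f4_def
    by (cases a; cases b) auto
  show "0 + a = a" unfolding plus_f4_def zero_f4_def by simp
qed
end

definition f4conj :: "f4 \<Rightarrow> f4" where "f4conj x = f4mul x x"

definition vecs :: "nat \<Rightarrow> (nat \<Rightarrow> f4) set" where
  "vecs n = {v. \<forall>i\<ge>n. v i = F0}"

definition vadd :: "(nat \<Rightarrow> f4) \<Rightarrow> (nat \<Rightarrow> f4) \<Rightarrow> (nat \<Rightarrow> f4)" where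
  "vadd u v = (\<lambda>i. f4add (u i) (v i))"

text \<open>Trace inner product sum_i (u_i conj(v_i) + conj(u_i) v_i); its value lies in F_2 = {0,1}.\<close>
definition tip :: "nat \<Rightarrow> (nat \<Rightarrow> f4) \<Rightarrow> (nat \<Rightarrow> f4) \<Rightarrow> f4" where
  "tip n u v = (\<Sum>i<n. f4add (f4mul (u i) (f4conj (v i))) (f4mul (f4conj (u i)) (v i)))"

definition additive_code :: "nat \<Rightarrow> (nat \<Rightarrow> f4) set \<Rightarrow> bool" where
  "additive_code n C \<longleftrightarrow> C \<subseteq> vecs n \<and> (\<lambda>_. F0) \<in> C \<and> (\<forall>u\<in>C. \<forall>v\<in>C. vadd u v \<in> C)"

definition trace_dual :: "nat \<Rightarrow> (nat \<Rightarrow> f4) set \<Rightarrow> (nat \<Rightarrow> f4) set" where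
  "trace_dual n C = {v \<in> vecs n. \<forall>c\<in>C. tip n v c = F0}"

definition self_orthogonal :: "nat \<Rightarrow> (nat \<Rightarrow> f4) set \<Rightarrow> bool" where
  "self_orthogonal n C \<longleftrightarrow> C \<subseteq> trace_dual n C"

definition wt :: "nat \<Rightarrow> (nat \<Rightarrow> f4) \<Rightarrow> nat" where
  "wt n v = card {i. i < n \<and> v i \<noteq> F0}"

end

theory Submission
  imports Defs "HOL-Library.FuncSet"
begin

(* If w is not in the trace dual of an additive code C, then
   C' = {c in C. <w, c> = 0} has half the size of C, and the dual of C' is spanned by the
   dual of C and w; so a vector b outside the dual of C enters the dual of C' only if
   w lies in b + dual(C). Since |C| |dual(C)| = 4^n (a character-sum count), the |B| + 1
   cosets dual(C) and b + dual(C), b in B, cannot cover F_4^n as long as |B| + 1 < |C|.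
   For B the nonzero vectors of weight < d outside dual(C_1), the hypothesis gives
   |B| + 1 < 2^(n-k_2+1), so k_2 - k_1 halvings starting from C_1 keep all of B out of the
   dual, and the dual of the resulting C_2 has minimum weight at least min(d, d_1). *)

lemma f4mul_F0_right [simp]: "f4mul x F0 = F0"
  by (cases x) auto

lemma f4add_F0_right [simp]: "f4add x F0 = x"
  by (cases x) auto

lemma f4conj_F0 [simp]: "f4conj F0 = F0"
  by (simp add: f4conj_def)

lemma UNIV_f4: "(UNIV :: f4 set) = {F0, F1, FW, FW2}"
  using f4.exhaust by auto

lemma vadd_vadd_cancel [simp]: "vadd (vadd u v) v = u"
proof -
  have "f4add (f4add a b) b = a" for a b
    by (cases a; cases b) auto
  then show ?thesis
    by (simp add: vadd_def)
qed

lemma vadd_in_vecs: "u \<in> vecs n \<Longrightarrow> v \<in> vecs n \<Longrightarrow> vadd u v \<in> vecs n"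
  by (simp add: vecs_def vadd_def)

lemma finite_vecs: "finite (vecs n)"
proof (rule finite_subset)
  show "finite {v. \<forall>i. (i \<in> {..<n} \<longrightarrow> v i \<in> UNIV) \<and> (i \<notin> {..<n} \<longrightarrow> v i = F0)}"
    by (rule finite_set_of_finite_funs) (simp_all add: UNIV_f4)
qed (auto simp: vecs_def)

lemma tip_commute: "tip n u v = tip n v u"
proof -
  have "f4add (f4mul a (f4conj b)) (f4mul (f4conj a) b) = f4add (f4mul b (f4conj a)) (f4mul (f4conj b) a)"
    for a b
    by (cases a; cases b) (auto simp: f4conj_def)
  then show ?thesis
    unfolding tip_def by simp
qed

lemma tip_vadd_left: "tip n (vadd u u') v = tip n u v + tip n u' v"
proof -
  have "f4add (f4mul (f4add a b) (f4conj y)) (f4mul (f4conj (f4add a b)) y) =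
    f4add (f4mul a (f4conj y)) (f4mul (f4conj a) y) + f4add (f4mul b (f4conj y)) (f4mul (f4conj b) y)"
    for a b y
    by (cases a; cases b; cases y) (auto simp: f4conj_def plus_f4_def)
  then show ?thesis
    unfolding tip_def vadd_def by (simp only: sum.distrib)
qed

lemma tip_vadd_right: "tip n u (vadd v v') = tip n u v + tip n u v'"
  by (metis tip_commute tip_vadd_left)

lemma tip_zero_right [simp]: "tip n u (\<lambda>_. F0) = F0"
  by (simp add: tip_def) (simp add: zero_f4_def [symmetric])

lemma tip_zero_left [simp]: "tip n (\<lambda>_. F0) u = F0"
  by (metis tip_commute tip_zero_right)

lemma tip_F0_or_F1: "tip n u v = F0 \<or> tip n u v = F1"
proof (induction n)
  case 0
  then show ?case
    by (simp add: tip_def zero_f4_def)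
next
  case (Suc n)
  have "f4add (f4mul (u n) (f4conj (v n))) (f4mul (f4conj (u n)) (v n)) \<in> {F0, F1}"
    by (cases "u n"; cases "v n") (auto simp: f4conj_def)
  with Suc show ?case
    by (auto simp: tip_def plus_f4_def)
qed

lemma tip_neq_F0_iff: "tip n u v \<noteq> F0 \<longleftrightarrow> tip n u v = F1"
  using tip_F0_or_F1 by auto

lemma exists_tip_eq_F1:
  assumes "c \<in> vecs n" and "c \<noteq> (\<lambda>_. F0)"
  shows "\<exists>w\<in>vecs n. tip n w c = F1"
proof -
  obtain i where ci: "c i \<noteq> F0"
    using assms(2) by auto
  then have "i < n"
    using assms(1) by (auto simp: vecs_def not_less[symmetric])
  define a where "a = (if c i = F1 then FW else F1)"
  define w where "w = (\<lambda>j. if j = i then a else F0)"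
  have "w \<in> vecs n"
    using \<open>i < n\<close> by (auto simp: w_def vecs_def)
  have "tip n w c = (\<Sum>j<n. if j = i then f4add (f4mul a (f4conj (c i))) (f4mul (f4conj a) (c i)) else 0)"
    unfolding tip_def by (rule sum.cong) (auto simp: w_def zero_f4_def)
  also have "\<dots> = f4add (f4mul a (f4conj (c i))) (f4mul (f4conj a) (c i))"
    using \<open>i < n\<close> by simp
  also have "\<dots> = F1"
    using ci by (cases "c i") (auto simp: a_def f4conj_def)
  finally show ?thesis
    using \<open>w \<in> vecs n\<close> by blast
qed

definition chi :: "f4 \<Rightarrow> real" where
  "chi x = (if x = F0 then 1 else -1)"

locale F2_form =
  fixes G :: "(nat \<Rightarrow> f4) set" and \<phi> :: "(nat \<Rightarrow> f4) \<Rightarrow> f4"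
  assumes finite: "finite G"
    and closed: "\<And>u v. u \<in> G \<Longrightarrow> v \<in> G \<Longrightarrow> vadd u v \<in> G"
    and additive: "\<And>u v. u \<in> G \<Longrightarrow> v \<in> G \<Longrightarrow> \<phi> (vadd u v) = \<phi> u + \<phi> v"
    and F2_valued: "\<And>u. u \<in> G \<Longrightarrow> \<phi> u = F0 \<or> \<phi> u = F1"
begin

lemma sum_chi_eq_0:
  assumes "g0 \<in> G" and "\<phi> g0 = F1"
  shows "(\<Sum>g\<in>G. chi (\<phi> g)) = 0"
proof -
  have "bij_betw (\<lambda>g. vadd g g0) G G"
    by (rule bij_betwI[where g = "\<lambda>g. vadd g g0"]) (use closed assms(1) in auto)
  then have "(\<Sum>g\<in>G. chi (\<phi> g)) = (\<Sum>g\<in>G. chi (\<phi> (vadd g g0)))"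
    using sum.reindex_bij_betw[of _ G G "\<lambda>g. chi (\<phi> g)"] by simp
  also have "\<dots> = (\<Sum>g\<in>G. - chi (\<phi> g))"
  proof (rule sum.cong)
    fix g
    assume "g \<in> G"
    then show "chi (\<phi> (vadd g g0)) = - chi (\<phi> g)"
      using assms F2_valued[of g] by (auto simp: additive chi_def plus_f4_def)
  qed simp
  finally show ?thesis
    by (simp add: sum_negf)
qed

lemma card_kernel_half:
  assumes "g0 \<in> G" and "\<phi> g0 = F1"
  shows "2 * card {g\<in>G. \<phi> g = F0} = card G"
proof -
  let ?K = "{g\<in>G. \<phi> g = F0}"
  have "(\<Sum>g\<in>G. chi (\<phi> g)) = (\<Sum>g\<in>?K. chi (\<phi> g)) + (\<Sum>g\<in>G - ?K. chi (\<phi> g))"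
    using sum.subset_diff[of ?K G "\<lambda>g. chi (\<phi> g)"] finite by (simp add: add.commute)
  also have "\<dots> = real (card ?K) - real (card (G - ?K))"
    by (simp add: chi_def sum_negf)
  finally have "card ?K = card (G - ?K)"
    using sum_chi_eq_0[OF assms] by simp
  moreover have "card G = card ?K + card (G - ?K)"
    using finite by (simp add: card_Diff_subset card_mono)
  ultimately show ?thesis
    by simp
qed

end

lemma zero_in_trace_dual: "(\<lambda>_. F0) \<in> trace_dual n C"
  by (simp add: trace_dual_def vecs_def)

lemma trace_dual_antimono: "C \<subseteq> C' \<Longrightarrow> trace_dual n C' \<subseteq> trace_dual n C"
  by (auto simp: trace_dual_def)

lemma F2_form_tip_left: "F2_form (vecs n) (\<lambda>u. tip n u c)"
  by unfold_locales (simp_all add: finite_vecs vadd_in_vecs tip_vadd_left tip_F0_or_F1)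

lemma F2_form_tip_right:
  assumes "additive_code n C"
  shows "F2_form C (tip n w)"
proof unfold_locales
  show "finite C"
    using assms finite_vecs by (auto simp: additive_code_def intro: finite_subset)
qed (use assms in \<open>simp_all add: additive_code_def tip_vadd_right tip_F0_or_F1\<close>)

lemma card_mult_card_trace_dual:
  assumes "additive_code n C"
  shows "card C * card (trace_dual n C) = card (vecs n)"
proof -
  let ?V = "vecs n" and ?D = "trace_dual n C"
  interpret C: F2_form C "tip n w" for w
    using assms by (rule F2_form_tip_right)
  have "C \<subseteq> ?V" and zero: "(\<lambda>_. F0) \<in> C"
    using assms by (auto simp: additive_code_def)
  have "?D \<subseteq> ?V"
    by (auto simp: trace_dual_def)
  have "(\<Sum>c\<in>C. chi (tip n w c)) = (if w \<in> ?D then real (card C) else 0)" if w: "w \<in> ?V" for w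
  proof (cases "w \<in> ?D")
    case False
    then obtain c0 where "c0 \<in> C" and "tip n w c0 = F1"
      using w by (auto simp: trace_dual_def tip_neq_F0_iff)
    then show ?thesis
      using False C.sum_chi_eq_0 by simp
  qed (simp add: trace_dual_def chi_def)
  then have "(\<Sum>w\<in>?V. \<Sum>c\<in>C. chi (tip n w c)) = real (card C) * real (card ?D)"
    using \<open>?D \<subseteq> ?V\<close> finite_vecs by (simp add: sum.If_cases Int_absorb1 Int_commute)
  moreover have "(\<Sum>w\<in>?V. chi (tip n w c)) = (if c = (\<lambda>_. F0) then real (card ?V) else 0)"
    if c: "c \<in> C" for c
  proof (cases "c = (\<lambda>_. F0)")
    case False
    then obtain w0 where "w0 \<in> ?V" and "tip n w0 c = F1"
      using exists_tip_eq_F1 c \<open>C \<subseteq> ?V\<close> by blast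
    then show ?thesis
      using False F2_form.sum_chi_eq_0[OF F2_form_tip_left] by simp
  qed (simp add: chi_def)
  then have "(\<Sum>c\<in>C. \<Sum>w\<in>?V. chi (tip n w c)) = real (card ?V)"
    using zero C.finite by (simp add: sum.delta')
  moreover have "(\<Sum>w\<in>?V. \<Sum>c\<in>C. chi (tip n w c)) = (\<Sum>c\<in>C. \<Sum>w\<in>?V. chi (tip n w c))"
    by (rule sum.swap)
  ultimately have "real (card C) * real (card ?D) = real (card ?V)"
    by simp
  then show ?thesis
    by (simp only: of_nat_mult [symmetric] of_nat_eq_iff)
qed

lemma additive_code_orth_subcode:
  "additive_code n C \<Longrightarrow> additive_code n {c\<in>C. tip n w c = F0}"
  by (auto simp: additive_code_def tip_vadd_right plus_f4_def)

lemma trace_dual_orth_subcode: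
  assumes C: "additive_code n C" and "w \<in> vecs n"
    and b: "b \<in> trace_dual n {c\<in>C. tip n w c = F0}" and "b \<notin> trace_dual n C"
  shows "vadd w b \<in> trace_dual n C"
proof -
  have "b \<in> vecs n"
    using b by (simp add: trace_dual_def)
  with \<open>b \<notin> trace_dual n C\<close> obtain c1 where "c1 \<in> C" and bc1: "tip n b c1 = F1"
    by (auto simp: trace_dual_def tip_neq_F0_iff)
  have orth: "tip n b c = F0" if "c \<in> C" and "tip n w c = F0" for c
    using b that by (simp add: trace_dual_def)
  have wc1: "tip n w c1 = F1"
    using orth[OF \<open>c1 \<in> C\<close>] bc1 tip_F0_or_F1[of n w c1] by auto
  have "tip n (vadd w b) c = F0" if "c \<in> C" for c
  proof (cases "tip n w c = F0")
    case True
    then show ?thesis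
      using orth[OF that] by (simp add: tip_vadd_left plus_f4_def)
  next
    case False
    then have wc: "tip n w c = F1"
      by (simp add: tip_neq_F0_iff)
    have "vadd c c1 \<in> C"
      using C that \<open>c1 \<in> C\<close> by (simp add: additive_code_def)
    moreover have "tip n w (vadd c c1) = F0"
      using wc wc1 by (simp add: tip_vadd_right plus_f4_def)
    ultimately have "tip n b (vadd c c1) = F0"
      by (rule orth)
    then have "tip n b c = F1"
      using bc1 tip_F0_or_F1[of n b c] by (auto simp: tip_vadd_right plus_f4_def)
    then show ?thesis
      using wc by (simp add: tip_vadd_left plus_f4_def)
  qed
  then show ?thesis
    using \<open>w \<in> vecs n\<close> \<open>b \<in> vecs n\<close> by (simp add: trace_dual_def vadd_in_vecs)
qed

lemma exists_vec_outside_translates: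
  assumes "finite B" and "finite D" and "(card B + 1) * card D < card V"
  shows "\<exists>w\<in>V. w \<notin> D \<and> (\<forall>b\<in>B. vadd w b \<notin> D)"
proof -
  let ?Bad = "D \<union> (\<Union>b\<in>B. (\<lambda>u. vadd u b) ` D)"
  have "card ?Bad \<le> card D + card (\<Union>b\<in>B. (\<lambda>u. vadd u b) ` D)"
    by (rule card_Un_le)
  also have "\<dots> \<le> card D + (\<Sum>b\<in>B. card ((\<lambda>u. vadd u b) ` D))"
    by (intro add_left_mono card_UN_le \<open>finite B\<close>)
  also have "\<dots> \<le> card D + (\<Sum>b\<in>B. card D)"
    by (intro add_left_mono sum_mono card_image_le \<open>finite D\<close>)
  finally have "card ?Bad < card V"
    using assms(3) by (simp add: algebra_simps)
  moreover have "finite ?Bad"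
    using assms(1,2) by simp
  ultimately have "\<not> V \<subseteq> ?Bad"
    by (meson card_mono not_le)
  then obtain w where "w \<in> V" and "w \<notin> ?Bad"
    by blast
  moreover have "vadd w b \<notin> D" if "b \<in> B" for b
    using \<open>w \<notin> ?Bad\<close> that by (metis UN_I UnI2 image_eqI vadd_vadd_cancel)
  ultimately show ?thesis
    by blast
qed

lemma exists_half_subcode_avoiding:
  assumes C: "additive_code n C" and "finite B" and "B \<subseteq> vecs n"
    and avoid: "B \<inter> trace_dual n C = {}" and "card B + 1 < card C"
  shows "\<exists>C'. additive_code n C' \<and> C' \<subseteq> C \<and> 2 * card C' = card C \<and> B \<inter> trace_dual n C' = {}"
proof -
  let ?D = "trace_dual n C"
  have "finite ?D"
    using finite_vecs by (rule finite_subset[rotated]) (auto simp: trace_dual_def)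
  then have "card ?D > 0"
    using zero_in_trace_dual card_gt_0_iff by blast
  then have "(card B + 1) * card ?D < card C * card ?D"
    using \<open>card B + 1 < card C\<close> by (rule mult_less_mono1[rotated])
  also have "\<dots> = card (vecs n)"
    by (rule card_mult_card_trace_dual[OF C])
  finally have "(card B + 1) * card ?D < card (vecs n)" .
  then obtain w where "w \<in> vecs n" and "w \<notin> ?D" and wB: "\<forall>b\<in>B. vadd w b \<notin> ?D"
    using exists_vec_outside_translates \<open>finite B\<close> \<open>finite ?D\<close> by blast
  let ?C' = "{c\<in>C. tip n w c = F0}"
  obtain c0 where "c0 \<in> C" and "tip n w c0 = F1"
    using \<open>w \<in> vecs n\<close> \<open>w \<notin> ?D\<close> by (auto simp: trace_dual_def tip_neq_F0_iff)
  then have "2 * card ?C' = card C"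
    by (rule F2_form.card_kernel_half[OF F2_form_tip_right[OF C]])
  moreover have "b \<notin> trace_dual n ?C'" if "b \<in> B" for b
    using trace_dual_orth_subcode[OF C \<open>w \<in> vecs n\<close>, of b] avoid wB that by blast
  ultimately show ?thesis
    using additive_code_orth_subcode[OF C] by (intro exI[of _ ?C']) auto
qed

lemma exists_subcode_avoiding:
  assumes "additive_code n C" and "card C = 2 ^ m" and "finite B" and "B \<subseteq> vecs n"
    and "B \<inter> trace_dual n C = {}" and "j \<le> m" and "card B + 1 < 2 * 2 ^ (m - j)"
  shows "\<exists>C'. additive_code n C' \<and> C' \<subseteq> C \<and> card C' = 2 ^ (m - j) \<and> B \<inter> trace_dual n C' = {}"
  using assms(6,7)
proof (induction j)
  case 0
  then show ?case
    using assms(1,2,5) by auto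
next
  case (Suc j)
  then have "m - j = Suc (m - Suc j)"
    by simp
  with Suc obtain C' where C': "additive_code n C'" "C' \<subseteq> C" "card C' = 2 ^ (m - j)"
    "B \<inter> trace_dual n C' = {}"
    by auto
  have "card B + 1 < card C'"
    using Suc.prems C'(3) \<open>m - j = Suc (m - Suc j)\<close> by simp
  then obtain C'' where "additive_code n C''" "C'' \<subseteq> C'" "2 * card C'' = card C'"
    "B \<inter> trace_dual n C'' = {}"
    using exists_half_subcode_avoiding[OF C'(1) assms(3,4) C'(4)] by blast
  then show ?case
    using C' \<open>m - j = Suc (m - Suc j)\<close> by auto
qed

lemma wt_pos: "v \<in> vecs n \<Longrightarrow> v \<noteq> (\<lambda>_. F0) \<Longrightarrow> 0 < wt n v"
  by (auto simp: wt_def vecs_def card_gt_0_iff) (metis not_less)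

lemma card_weight_eq_le: "card {v\<in>vecs n. wt n v = i} \<le> 3 ^ i * (n choose i)"
proof -
  let ?S = "{S. S \<subseteq> {..<n} \<and> card S = i}"
  let ?D = "SIGMA S:?S. PiE S (\<lambda>_. {F1, FW, FW2})"
  let ?extend = "\<lambda>(S, f). (\<lambda>j. if j \<in> S then f j else F0)"
  have "{v\<in>vecs n. wt n v = i} \<subseteq> ?extend ` ?D"
  proof
    fix v
    assume v: "v \<in> {v\<in>vecs n. wt n v = i}"
    define S where "S = {j. j < n \<and> v j \<noteq> F0}"
    have "S \<in> ?S"
      using v by (auto simp: S_def wt_def)
    moreover have "restrict v S \<in> PiE S (\<lambda>_. {F1, FW, FW2})"
      using f4.exhaust by (auto simp: S_def)
    moreover have "v = ?extend (S, restrict v S)"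
      using v by (auto simp: S_def vecs_def fun_eq_iff)
    ultimately show "v \<in> ?extend ` ?D"
      by blast
  qed
  moreover have "finite ?S"
    by (rule finite_subset[of _ "Pow {..<n}"]) auto
  then have "finite ?D"
    by (auto intro!: finite_PiE dest: finite_subset)
  ultimately have "card {v\<in>vecs n. wt n v = i} \<le> card ?D"
    by (meson card_image_le card_mono finite_imageI order_trans)
  also have "card ?D = (\<Sum>S\<in>?S. card (PiE S (\<lambda>_. {F1, FW, FW2})))"
    using \<open>finite ?S\<close> by (intro card_SigmaI) (auto intro!: finite_PiE dest: finite_subset)
  also have "\<dots> = (\<Sum>S\<in>?S. 3 ^ i)"
    by (intro sum.cong) (auto simp: card_PiE numeral_3_eq_3 dest: finite_subset)
  also have "\<dots> = 3 ^ i * (n choose i)"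
    using n_subsets[of "{..<n}" i] by simp
  finally show ?thesis .
qed

lemma card_low_weight_le:
  "card {v\<in>vecs n. v \<noteq> (\<lambda>_. F0) \<and> wt n v < d} \<le> (\<Sum>i=1..d-1. 3 ^ i * (n choose i))"
proof -
  have "{v\<in>vecs n. v \<noteq> (\<lambda>_. F0) \<and> wt n v < d} \<subseteq> (\<Union>i\<in>{1..d-1}. {v\<in>vecs n. wt n v = i})"
    using wt_pos by fastforce
  then have "card {v\<in>vecs n. v \<noteq> (\<lambda>_. F0) \<and> wt n v < d}
      \<le> card (\<Union>i\<in>{1..d-1}. {v\<in>vecs n. wt n v = i})"
    by (rule card_mono[rotated]) (simp add: finite_vecs)
  also have "\<dots> \<le> (\<Sum>i=1..d-1. card {v\<in>vecs n. wt n v = i})"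
    by (rule card_UN_le) simp
  also have "\<dots> \<le> (\<Sum>i=1..d-1. 3 ^ i * (n choose i))"
    by (intro sum_mono card_weight_eq_le)
  finally show ?thesis .
qed

lemma exists_subcode_dual_low_weight:
  assumes "additive_code n C" and "card C = 2 ^ m" and "j \<le> m"
    and "card {v\<in>vecs n. v \<noteq> (\<lambda>_. F0) \<and> wt n v < d} + 1 < 2 * 2 ^ (m - j)"
  shows "\<exists>C'. additive_code n C' \<and> C' \<subseteq> C \<and> card C' = 2 ^ (m - j)
    \<and> (\<forall>v\<in>trace_dual n C'. v \<noteq> (\<lambda>_. F0) \<longrightarrow> v \<in> trace_dual n C \<or> d \<le> wt n v)"
proof -
  define B where "B = {v\<in>vecs n. v \<noteq> (\<lambda>_. F0) \<and> wt n v < d \<and> v \<notin> trace_dual n C}"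
  have "finite B" and "B \<subseteq> vecs n" and "B \<inter> trace_dual n C = {}"
    using finite_vecs by (auto simp: B_def)
  moreover have "card B \<le> card {v\<in>vecs n. v \<noteq> (\<lambda>_. F0) \<and> wt n v < d}"
    by (rule card_mono) (auto simp: B_def finite_vecs)
  ultimately obtain C' where "additive_code n C'" "C' \<subseteq> C" "card C' = 2 ^ (m - j)"
    and "B \<inter> trace_dual n C' = {}"
    using exists_subcode_avoiding[OF assms(1,2), of B j] assms(3,4) by auto
  then show ?thesis
    by (intro exI[of _ C']) (auto simp: B_def trace_dual_def not_less)
qed

lemma pow2_quotient_le:
  assumes "1 \<le> r" and "r \<le> N"
  shows "(2 ^ N - 1) / (2 ^ r - 1) \<le> 2 * 2 ^ (N - r) - (1::real)"
proof -
  define a :: real where "a = 2 ^ r"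
  define Q :: real where "Q = 2 ^ (N - r)"
  have "a \<ge> 2"
    using assms(1) unfolding a_def by (metis power_increasing power_one_right one_le_numeral)
  have "Q \<ge> 1"
    by (simp add: Q_def)
  have "(2::real) ^ N = a * Q"
    unfolding a_def Q_def using assms(2) by (simp flip: power_add)
  then have "2 ^ N - 1 = (2 * Q - 1) * (a - 1) - (a - 2) * (Q - 1)"
    by (simp add: algebra_simps)
  moreover have "(a - 2) * (Q - 1) \<ge> 0"
    using \<open>a \<ge> 2\<close> \<open>Q \<ge> 1\<close> by simp
  ultimately have "2 ^ N - 1 \<le> (2 * Q - 1) * (a - 1)"
    by linarith
  then show ?thesis
    using \<open>a \<ge> 2\<close> by (simp add: divide_le_eq a_def Q_def)
qed

lemma card_low_weight_lt:
  fixes k1 k2 :: nat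
  assumes "k1 < k2" and "k2 \<le> n"
    and "(\<Sum>i=1..d-1. 3 ^ i * real (n choose i)) < (2 ^ (n - k1) - 1) / (2 ^ (k2 - k1) - 1)"
  shows "card {v\<in>vecs n. v \<noteq> (\<lambda>_. F0) \<and> wt n v < d} + 1 < 2 * 2 ^ (n - k2)"
proof -
  let ?L = "{v\<in>vecs n. v \<noteq> (\<lambda>_. F0) \<and> wt n v < d}"
  have "real (card ?L) \<le> (\<Sum>i=1..d-1. 3 ^ i * real (n choose i))"
    using of_nat_mono[OF card_low_weight_le[of n d], where 'a = real] by simp
  also have "\<dots> < (2 ^ (n - k1) - 1) / (2 ^ (k2 - k1) - 1)"
    by (rule assms(3))
  also have "\<dots> \<le> 2 * 2 ^ ((n - k1) - (k2 - k1)) - 1"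
    using assms(1,2) by (intro pow2_quotient_le) auto
  also have "(n - k1) - (k2 - k1) = n - k2"
    using assms(1,2) by simp
  finally have "real (card ?L + 1) < real (2 * 2 ^ (n - k2))"
    by simp
  then show ?thesis
    by (simp only: of_nat_less_iff)
qed

theorem mainTheorem9:
  fixes n k1 k2 d1 d :: nat and C1 :: "(nat \<Rightarrow> f4) set"
  assumes "n \<ge> 1" and "k1 < k2" and "k2 \<le> n"
    and "additive_code n C1" and "self_orthogonal n C1"
    and "card C1 = 2 ^ (n - k1)"
    and "\<forall>v\<in>trace_dual n C1. v \<noteq> (\<lambda>_. F0) \<longrightarrow> wt n v \<ge> d1"
    and "d \<ge> 1"
    and "(\<Sum>i=1..d-1. 3 ^ i * real (n choose i))
           < (2 ^ (n - k1) - 1) / (2 ^ (k2 - k1) - 1)"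
  shows "\<exists>C2. additive_code n C2 \<and> self_orthogonal n C2 \<and> C2 \<subseteq> C1
           \<and> card C2 = 2 ^ (n - k2)
           \<and> (\<forall>v\<in>trace_dual n C2. v \<noteq> (\<lambda>_. F0) \<longrightarrow> wt n v \<ge> min d d1)"
proof -
  have "k2 - k1 \<le> n - k1" and "(n - k1) - (k2 - k1) = n - k2"
    using assms(2,3) by simp_all
  moreover have "card {v\<in>vecs n. v \<noteq> (\<lambda>_. F0) \<and> wt n v < d} + 1 < 2 * 2 ^ (n - k2)"
    using assms(2,3,9) by (rule card_low_weight_lt)
  ultimately obtain C2 where "additive_code n C2" "C2 \<subseteq> C1" "card C2 = 2 ^ (n - k2)"
    and dual_C2: "\<forall>v\<in>trace_dual n C2. v \<noteq> (\<lambda>_. F0) \<longrightarrow> v \<in> trace_dual n C1 \<or> d \<le> wt n v"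
    using exists_subcode_dual_low_weight[OF assms(4,6), of "k2 - k1" d] by auto
  moreover have "self_orthogonal n C2"
    using assms(5) \<open>C2 \<subseteq> C1\<close> trace_dual_antimono unfolding self_orthogonal_def by blast
  moreover have "\<forall>v\<in>trace_dual n C2. v \<noteq> (\<lambda>_. F0) \<longrightarrow> wt n v \<ge> min d d1"
    using dual_C2 assms(7) by fastforce
  ultimately show ?thesis
    by blast
qed

end
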